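(* For a commutative ring $R$, the following are equivalent: (1) $R$ is uniquely weakly nil clean; (2) $R/Nil(R)$ is semi Boolean and idempotents can be lifted uniquely weakly modulo $Nil(R)$.
   Context: All rings are associative with identity; $Nil(R)$ is the set (here, ideal) of nilpotent elements and $Idem(R)$ the set of idempotents. $R$ is uniquely weakly nil clean if for every $x\in R$ there exists a unique $e\in Idem(R)$ with $x-e\in Nil(R)$ or $x+e\in Nil(R)$. A ring $A$ is semi Boolean if for every $x\in A$, $x^2=x$ or $x^2=-x$. Idempotents can be lifted uniquely weakly modulo an ideal $I$ if for every $x\in R$ with $x^2-x\in I$ there exists a unique $e\in Idem(R)$ with $x-e\in I$ or $x+e\in I$. *)

theory Defs
  imports "HOL-Algebra.QuotRing"
begin

definition nilpotents :: "('a, 'b) ring_scheme \<Rightarrow> 'a set" where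
  "nilpotents R = {x \<in> carrier R. \<exists>n::nat. x [^]\<^bsub>R\<^esub> n = \<zero>\<^bsub>R\<^esub>}"

definition idempotents :: "('a, 'b) ring_scheme \<Rightarrow> 'a set" where
  "idempotents R = {e \<in> carrier R. e \<otimes>\<^bsub>R\<^esub> e = e}"

definition uniquely_weakly_nil_clean :: "('a, 'b) ring_scheme \<Rightarrow> bool" where
  "uniquely_weakly_nil_clean R \<longleftrightarrow>
     (\<forall>x \<in> carrier R. \<exists>!e. e \<in> idempotents R \<and>
        (x \<ominus>\<^bsub>R\<^esub> e \<in> nilpotents R \<or> x \<oplus>\<^bsub>R\<^esub> e \<in> nilpotents R))"

definition semi_boolean :: "('a, 'b) ring_scheme \<Rightarrow> bool" where
  "semi_boolean A \<longleftrightarrow>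
     (\<forall>x \<in> carrier A. x \<otimes>\<^bsub>A\<^esub> x = x \<or> x \<otimes>\<^bsub>A\<^esub> x = \<ominus>\<^bsub>A\<^esub> x)"

definition idems_lift_uniquely_weakly :: "('a, 'b) ring_scheme \<Rightarrow> 'a set \<Rightarrow> bool" where
  "idems_lift_uniquely_weakly R I \<longleftrightarrow>
     (\<forall>x \<in> carrier R. (x \<otimes>\<^bsub>R\<^esub> x) \<ominus>\<^bsub>R\<^esub> x \<in> I \<longrightarrow>
        (\<exists>!e. e \<in> idempotents R \<and> (x \<ominus>\<^bsub>R\<^esub> e \<in> I \<or> x \<oplus>\<^bsub>R\<^esub> e \<in> I)))"

end

theory Submission
  imports Defs
begin

text \<open>The case
  \<open>x\<^sup>2 + x \<in> I\<close> reduces to the lifting property for \<open>-x\<close>, which is weakly congruent to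
  the same idempotents as \<open>x\<close>.\<close>

text \<open>The case \<open>i = j = 0\<close>, \<open>k = m + n\<close> shows that \<open>a \<oplus> b\<close> is nilpotent; the induction on
  the remaining exponent budget \<open>k\<close> replaces the binomial theorem.\<close>

lemma (in cring) pow_add_eq_zero_of_nilpotent:
  assumes a: "a \<in> carrier R" and b: "b \<in> carrier R"
    and am: "a [^] (m::nat) = \<zero>" and bn: "b [^] (n::nat) = \<zero>"
    and "i \<le> m" "j \<le> n" "(m - i) + (n - j) = k"
  shows "a [^] i \<otimes> b [^] j \<otimes> (a \<oplus> b) [^] k = \<zero>"
  using assms(5-7)
proof (induction k arbitrary: i j)
  case 0
  then have "i = m" by simp
  then show ?case using a b am by simp
next
  case (Suc k)
  show ?case
  proof (cases "i = m \<or> j = n")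
    case True
    then show ?thesis using a b am bn by auto
  next
    case False
    have "a [^] i \<otimes> b [^] j \<otimes> (a \<oplus> b) [^] Suc k =
          a [^] Suc i \<otimes> b [^] j \<otimes> (a \<oplus> b) [^] k \<oplus> a [^] i \<otimes> b [^] Suc j \<otimes> (a \<oplus> b) [^] k"
      using a b nat_pow_closed[OF a, of i] nat_pow_closed[OF b, of j]
        nat_pow_closed[OF add.m_closed[OF a b], of k]
      unfolding nat_pow_Suc by algebra
    also have "\<dots> = \<zero>"
      using Suc.IH[of "Suc i" j] Suc.IH[of i "Suc j"] Suc.prems False by auto
    finally show ?thesis .
  qed
qed

lemma (in cring) nilpotents_ideal: "ideal (nilpotents R) R"
proof (rule idealI)
  show "subgroup (nilpotents R) (add_monoid R)"
  proof
    show "nilpotents R \<subseteq> carrier (add_monoid R)" by (auto simp: nilpotents_def)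
    show "\<one>\<^bsub>add_monoid R\<^esub> \<in> nilpotents R"
      by (auto simp: nilpotents_def intro!: exI[of _ 1])
    fix x y assume "x \<in> nilpotents R" "y \<in> nilpotents R"
    then obtain m n where x: "x \<in> carrier R" and y: "y \<in> carrier R"
      and m: "x [^] (m::nat) = \<zero>" and n: "y [^] (n::nat) = \<zero>" by (auto simp: nilpotents_def)
    have "(x \<oplus> y) [^] (m + n) = \<zero>"
      using pow_add_eq_zero_of_nilpotent[OF x y m n, of 0 0 "m + n"] x y by simp
    then show "x \<otimes>\<^bsub>add_monoid R\<^esub> y \<in> nilpotents R" using x y by (auto simp: nilpotents_def)
    have "(\<ominus> x) [^] m = \<zero>"
      using x m nat_pow_distrib[of "\<ominus> \<one>" x m] by (simp add: l_minus)
    then show "inv\<^bsub>add_monoid R\<^esub> x \<in> nilpotents R"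
      using x by (auto simp: nilpotents_def a_inv_def[symmetric])
  qed
next
  fix a x assume "a \<in> nilpotents R" and x: "x \<in> carrier R"
  then obtain m where a: "a \<in> carrier R" and m: "a [^] (m::nat) = \<zero>" by (auto simp: nilpotents_def)
  show "x \<otimes> a \<in> nilpotents R" "a \<otimes> x \<in> nilpotents R"
    using a x m by (auto simp: nilpotents_def nat_pow_distrib intro!: exI[of _ m])
qed (rule ring_axioms)

lemma (in ideal) rcos_eq_iff_minus_mem:
  assumes "a \<in> carrier R" "b \<in> carrier R"
  shows "I +> a = I +> b \<longleftrightarrow> a \<ominus> b \<in> I"
  using assms a_repr_independence'[of a b] a_repr_independenceD[of a b]
    a_rcos_module_minus[OF ring_axioms, of b a]
  by auto

lemma (in cring) semi_boolean_quotient_iff: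
  assumes "ideal I R"
  shows "semi_boolean (R Quot I) \<longleftrightarrow> (\<forall>x \<in> carrier R. x \<otimes> x \<ominus> x \<in> I \<or> x \<otimes> x \<oplus> x \<in> I)"
proof -
  interpret I: ideal I R by fact
  interpret h: ring_hom_cring R "R Quot I" "(+>) I"
    by (rule I.rcos_ring_hom_cring) (rule is_cring)
  have carrier_Quot: "carrier (R Quot I) = (+>) I ` carrier R"
    unfolding FactRing_def A_RCOSETS_def' by (simp add: UNION_singleton_eq_range)
  have "(I +> x) \<otimes>\<^bsub>R Quot I\<^esub> (I +> x) = I +> x \<longleftrightarrow> x \<otimes> x \<ominus> x \<in> I"
    and "(I +> x) \<otimes>\<^bsub>R Quot I\<^esub> (I +> x) = \<ominus>\<^bsub>R Quot I\<^esub> (I +> x) \<longleftrightarrow> x \<otimes> x \<oplus> x \<in> I"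
    if x: "x \<in> carrier R" for x
  proof -
    show "(I +> x) \<otimes>\<^bsub>R Quot I\<^esub> (I +> x) = I +> x \<longleftrightarrow> x \<otimes> x \<ominus> x \<in> I"
      using x by (simp add: I.rcos_eq_iff_minus_mem flip: h.hom_mult)
    have "x \<otimes> x \<ominus> \<ominus> x = x \<otimes> x \<oplus> x" using x by algebra
    then show "(I +> x) \<otimes>\<^bsub>R Quot I\<^esub> (I +> x) = \<ominus>\<^bsub>R Quot I\<^esub> (I +> x) \<longleftrightarrow> x \<otimes> x \<oplus> x \<in> I"
      using x by (simp add: I.rcos_eq_iff_minus_mem flip: h.hom_mult h.hom_a_inv)
  qed
  then show ?thesis unfolding semi_boolean_def carrier_Quot by auto
qed

lemma (in cring) square_minus_self_mem_of_congruent_idempotent: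
  assumes "ideal I R" "e \<in> idempotents R" "x \<in> carrier R"
  shows "x \<ominus> e \<in> I \<Longrightarrow> x \<otimes> x \<ominus> x \<in> I"
    and "x \<oplus> e \<in> I \<Longrightarrow> x \<otimes> x \<oplus> x \<in> I"
proof -
  have e: "e \<in> carrier R" "e \<otimes> e = e" using assms(2) by (auto simp: idempotents_def)
  have "x \<otimes> x \<ominus> x = (x \<ominus> e) \<otimes> (x \<oplus> e \<ominus> \<one>)"
    and "x \<otimes> x \<oplus> x = (x \<oplus> e) \<otimes> (x \<ominus> e \<oplus> \<one>)"
    using e assms(3) by algebra+
  then show "x \<ominus> e \<in> I \<Longrightarrow> x \<otimes> x \<ominus> x \<in> I" and "x \<oplus> e \<in> I \<Longrightarrow> x \<otimes> x \<oplus> x \<in> I"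
    using e assms(1,3) by (simp_all add: ideal.I_r_closed)
qed

lemma (in ring) weakly_congruent_uminus_iff:
  assumes "ideal I R" "x \<in> carrier R" "e \<in> carrier R"
  shows "(\<ominus> x \<ominus> e \<in> I \<or> \<ominus> x \<oplus> e \<in> I) \<longleftrightarrow> (x \<ominus> e \<in> I \<or> x \<oplus> e \<in> I)"
proof -
  interpret I: ideal I R by fact
  have uminus_mem_iff: "\<ominus> z \<in> I \<longleftrightarrow> z \<in> I" if "z \<in> carrier R" for z
    using that I.a_inv_closed[of z] I.a_inv_closed[of "\<ominus> z"] by auto
  have "\<ominus> x \<ominus> e = \<ominus> (x \<oplus> e)" "\<ominus> x \<oplus> e = \<ominus> (x \<ominus> e)"
    using assms(2,3) by (simp_all add: minus_eq minus_add a_ac)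
  then show ?thesis
    using assms(2,3) uminus_mem_iff[of "x \<oplus> e"] uminus_mem_iff[of "x \<ominus> e"] by auto
qed

lemma (in cring) uniquely_weakly_clean_mod_ideal_iff:
  assumes I: "ideal I R"
  shows "(\<forall>x \<in> carrier R. \<exists>!e. e \<in> idempotents R \<and> (x \<ominus> e \<in> I \<or> x \<oplus> e \<in> I)) \<longleftrightarrow>
           semi_boolean (R Quot I) \<and> idems_lift_uniquely_weakly R I"
    (is "(\<forall>x \<in> carrier R. ?clean x) \<longleftrightarrow> _")
proof -
  have clean_if_square: "?clean x" if lift: "idems_lift_uniquely_weakly R I" and x: "x \<in> carrier R"
    and sq: "x \<otimes> x \<ominus> x \<in> I \<or> x \<otimes> x \<oplus> x \<in> I" for x
  proof (cases "x \<otimes> x \<ominus> x \<in> I")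
    case True
    then show ?thesis
      by (rule lift[unfolded idems_lift_uniquely_weakly_def, rule_format, OF x])
  next
    case False
    have "(\<ominus> x) \<otimes> (\<ominus> x) \<ominus> (\<ominus> x) = x \<otimes> x \<oplus> x" using x by algebra
    then have "(\<ominus> x) \<otimes> (\<ominus> x) \<ominus> (\<ominus> x) \<in> I" using sq False by simp
    then have "?clean (\<ominus> x)"
      by (rule lift[unfolded idems_lift_uniquely_weakly_def, rule_format, OF a_inv_closed[OF x]])
    moreover have "e \<in> idempotents R \<and> (\<ominus> x \<ominus> e \<in> I \<or> \<ominus> x \<oplus> e \<in> I) \<longleftrightarrow>
                   e \<in> idempotents R \<and> (x \<ominus> e \<in> I \<or> x \<oplus> e \<in> I)" for e
      using weakly_congruent_uminus_iff[OF I x, of e] by (auto simp: idempotents_def)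
    ultimately show ?thesis by simp
  qed
  have square_if_clean: "x \<otimes> x \<ominus> x \<in> I \<or> x \<otimes> x \<oplus> x \<in> I"
    if "?clean x" "x \<in> carrier R" for x
    using that square_minus_self_mem_of_congruent_idempotent[OF I] by blast
  show ?thesis
    unfolding semi_boolean_quotient_iff[OF I]
  proof (intro iffI conjI ballI)
    fix x assume "\<forall>x \<in> carrier R. ?clean x" and "x \<in> carrier R"
    then show "x \<otimes> x \<ominus> x \<in> I \<or> x \<otimes> x \<oplus> x \<in> I" by (simp add: square_if_clean)
  next
    assume "\<forall>x \<in> carrier R. ?clean x"
    then show "idems_lift_uniquely_weakly R I" by (simp add: idems_lift_uniquely_weakly_def)
  next
    fix x assume "(\<forall>x \<in> carrier R. x \<otimes> x \<ominus> x \<in> I \<or> x \<otimes> x \<oplus> x \<in> I) \<and>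
                  idems_lift_uniquely_weakly R I" and "x \<in> carrier R"
    then show "?clean x" by (simp add: clean_if_square)
  qed
qed

theorem mainTheorem9:
  fixes R :: "('a, 'b) ring_scheme"
  assumes "cring R"
  shows "uniquely_weakly_nil_clean R \<longleftrightarrow>
           (semi_boolean (R Quot (nilpotents R)) \<and>
            idems_lift_uniquely_weakly R (nilpotents R))"
  using cring.uniquely_weakly_clean_mod_ideal_iff[OF assms cring.nilpotents_ideal[OF assms]]
  unfolding uniquely_weakly_nil_clean_def .

end
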